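(* Given $n\ge 2$, an integer $1\le v_0<n$ and elements $\{p_v\}_{v_0\le v<n}$ of $K$ with $p_{v_0}=1$, there exists a cycle coalgebra $(C,\mathfrak p)$ such that $\mathfrak p_{1v}^1=\delta_{0v}$ for $0\le v<v_0$ and $\mathfrak p_{1v}^1=p_v$ for $v_0\le v<n$.
   Context: $K$ is an algebraically closed field of characteristic $0$ and $n\ge2$. $C$ is the coalgebra dual to $K[y]/\langle y^n\rangle$: basis $x_0,\dots,x_{n-1}$ (dual to $1,y,\dots,y^{n-1}$), $\Delta(x_i)=\sum_{j+k=i}x_j\otimes x_k$, $\epsilon(x_i)=\delta_{i0}$; $C\otimes C$ has the tensor product coalgebra structure; Sweedler notation $\Delta(b)=b_{(1)}\otimes b_{(2)}$. For linear maps $\mathfrak p,\mathfrak d\colon C\otimes C\to C$ write $a\cdot b=\mathfrak p(a\otimes b)$, $a:b=\mathfrak d(a\otimes b)$, and $\mathfrak p(x_i\otimes x_j)=\sum_{k=0}^{n-1}\mathfrak p_{ij}^kx_k$, $\mathfrak d(x_i\otimes x_j)=\sum_{k=0}^{n-1}\mathfrak d_{ij}^kx_k$. A triple $(C,\mathfrak p,\mathfrak d)$ with $\mathfrak p,\mathfrak d$ coalgebra morphisms is a regular $q$-magma coalgebra if there are coalgebra morphisms $C\otimes C\to C$, $a\otimes b\mapsto a^b$ and $a\otimes b\mapsto a_b$, with $a^{b_{(1)}}\cdot b_{(2)}=(a\cdot b_{(1)})^{b_{(2)}}=\epsilon(b)a$ and $(a:b_{(2)})_{b_{(1)}}=a_{b_{(2)}}:b_{(1)}=\epsilon(b)a$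 for all $a,b$. It is a regular $q$-cycle coalgebra if moreover for all $a,b,c\in C$: (1) $(a\cdot b_{(1)})\cdot(c:b_{(2)})=(a\cdot c_{(2)})\cdot(b\cdot c_{(1)})$; (2) $(a\cdot b_{(1)}):(c\cdot b_{(2)})=(a:c_{(2)})\cdot(b:c_{(1)})$; (3) $(a:b_{(1)}):(c:b_{(2)})=(a:c_{(2)}):(b\cdot c_{(1)})$. A cycle coalgebra is a pair $(C,\mathfrak p)$ such that $(C,\mathfrak p,\mathfrak p)$ is a regular $q$-cycle coalgebra. *)

theory Defs
  imports "HOL-Computational_Algebra.Polynomial"
begin

definition alg_closed_field :: "'a::field itself \<Rightarrow> bool" where
  "alg_closed_field _ \<longleftrightarrow> (\<forall>q :: 'a poly. degree q \<ge> 1 \<longrightarrow> (\<exists>x. poly q x = 0))"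

text \<open>Elements of C are coordinate functions w.r.t. the basis x_0,...,x_(n-1)
  (only indices below n matter).  A linear map C \<otimes> C \<rightarrow> C is given by its structure
  constants f i j k = f_ij^k, i.e. f(x_i \<otimes> x_j) = sum_k f_ij^k x_k.\<close>
type_synonym 'a elt = "nat \<Rightarrow> 'a"
type_synonym 'a bilin = "nat \<Rightarrow> nat \<Rightarrow> nat \<Rightarrow> 'a"

definition bx :: "nat \<Rightarrow> 'a::zero_neq_one elt" where
  "bx i = (\<lambda>k. if k = i then 1 else 0)"

definition app :: "nat \<Rightarrow> 'a::comm_ring_1 bilin \<Rightarrow> 'a elt \<Rightarrow> 'a elt \<Rightarrow> 'a elt" where
  "app n f a b = (\<lambda>k. if k < n then (\<Sum>i<n. \<Sum>j<n. a i * b j * f i j k) else 0)"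

definition cou :: "'a elt \<Rightarrow> 'a" where
  "cou a = a 0"

text \<open>Sweedler sum: for F bilinear, sweedler n F b = F(b_(1), b_(2)),
  using \<Delta>(x_j) = sum_{s+t=j} x_s \<otimes> x_t.\<close>
definition sweedler :: "nat \<Rightarrow> ('a::comm_ring_1 elt \<Rightarrow> 'a elt \<Rightarrow> 'a elt) \<Rightarrow> 'a elt \<Rightarrow> 'a elt" where
  "sweedler n F b = (\<lambda>k. \<Sum>j<n. b j * (\<Sum>s\<le>j. F (bx s) (bx (j - s)) k))"

definition eqC :: "nat \<Rightarrow> 'a elt \<Rightarrow> 'a elt \<Rightarrow> bool" where
  "eqC n u w \<longleftrightarrow> (\<forall>k<n. u k = w k)"

definition smul :: "'a::times \<Rightarrow> 'a elt \<Rightarrow> 'a elt" where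
  "smul c a = (\<lambda>k. c * a k)"

text \<open>f : C \<otimes> C \<rightarrow> C is a coalgebra morphism (C \<otimes> C with the tensor product coalgebra
  structure): \<Delta> \<circ> f = (f \<otimes> f) \<circ> \<Delta> and \<epsilon> \<circ> f = \<epsilon>, written out on the basis
  x_i \<otimes> x_j, comparing coefficients of x_s \<otimes> x_t.\<close>
definition coalg_mor :: "nat \<Rightarrow> 'a::comm_ring_1 bilin \<Rightarrow> bool" where
  "coalg_mor n f \<longleftrightarrow>
     (\<forall>i<n. \<forall>j<n. \<forall>s<n. \<forall>t<n.
        (if s + t < n then f i j (s + t) else 0) =
        (\<Sum>a\<le>i. \<Sum>c\<le>j. f a c s * f (i - a) (j - c) t)) \<and>
     (\<forall>i<n. \<forall>j<n. f i j 0 = (if i = 0 \<and> j = 0 then 1 else 0))"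

definition regular_q_magma :: "nat \<Rightarrow> 'a::comm_ring_1 bilin \<Rightarrow> 'a bilin \<Rightarrow> bool" where
  "regular_q_magma n p d \<longleftrightarrow> coalg_mor n p \<and> coalg_mor n d \<and>
     (\<exists>up lo. coalg_mor n up \<and> coalg_mor n lo \<and>
       (\<forall>a b.
          eqC n (sweedler n (\<lambda>b1 b2. app n p (app n up a b1) b2) b) (smul (cou b) a) \<and>
          eqC n (sweedler n (\<lambda>b1 b2. app n up (app n p a b1) b2) b) (smul (cou b) a) \<and>
          eqC n (sweedler n (\<lambda>b1 b2. app n lo (app n d a b2) b1) b) (smul (cou b) a) \<and>
          eqC n (sweedler n (\<lambda>b1 b2. app n d (app n lo a b2) b1) b) (smul (cou b) a)))"

definition regular_q_cycle :: "nat \<Rightarrow> 'a::comm_ring_1 bilin \<Rightarrow> 'a bilin \<Rightarrow> bool" where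
  "regular_q_cycle n p d \<longleftrightarrow> regular_q_magma n p d \<and>
     (\<forall>a b c.
        eqC n (sweedler n (\<lambda>b1 b2. app n p (app n p a b1) (app n d c b2)) b)
              (sweedler n (\<lambda>c1 c2. app n p (app n p a c2) (app n p b c1)) c) \<and>
        eqC n (sweedler n (\<lambda>b1 b2. app n d (app n p a b1) (app n p c b2)) b)
              (sweedler n (\<lambda>c1 c2. app n p (app n d a c2) (app n d b c1)) c) \<and>
        eqC n (sweedler n (\<lambda>b1 b2. app n d (app n d a b1) (app n d c b2)) b)
              (sweedler n (\<lambda>c1 c2. app n d (app n d a c2) (app n p b c1)) c))"

definition cycle_coalgebra :: "nat \<Rightarrow> 'a::comm_ring_1 bilin \<Rightarrow> bool" where
  "cycle_coalgebra n p \<longleftrightarrow> regular_q_cycle n p p"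

end

theory Submission
  imports Defs "HOL-Computational_Algebra.Formal_Power_Series"
begin

text \<open>Fix \<open>m > 0\<close> and put \<open>G\<^sub>r = (1 - m X^m)^(-r/m)\<close>, so that \<open>G\<^sub>r G\<^sub>s = G\<^bsub>r+s\<^esub>\<close> by
  Vandermonde.  Hence \<open>x\<^sub>i \<cdot> x\<^sub>j = ([X^j] G\<^sub>i) x\<^sub>i\<close> is a coalgebra morphism whose left and right
  inverses come from \<open>G\<^bsub>-i\<^esub>\<close>, and the cycle identity reduces to the Pochhammer identity
  \<open>[X^w] G\<^sub>k \<cdot> [X^j] G\<^bsub>k+w\<^esub> = [X^j] G\<^sub>k \<cdot> [X^w] G\<^bsub>k+j\<^esub>\<close>.
  Conjugating by the coalgebra automorphism of \<open>C\<close> dual to a substitution \<open>y \<mapsto> \<phi>(y)\<close>,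
  \<open>\<phi> = y + \<dots>\<close>, gives another cycle coalgebra, now with \<open>p\<^bsub>1v\<^esub>\<^sup>1 = [X^v] G\<^sub>1(\<phi>)\<close>.  As
  \<open>G\<^sub>1^m (1 - m X^m) = 1\<close>, choosing \<open>m = v\<^sub>0\<close> and \<open>\<phi>\<close> an \<open>m\<close>-th root of \<open>(P^m - 1)/(m P^m)\<close>
  makes \<open>G\<^sub>1(\<phi>)\<close> the prescribed series \<open>P = 1 + \<Sum>\<^bsub>v\<ge>v\<^sub>0\<^esub> p\<^sub>v X^v\<close>.  These roots exist over any
  field of characteristic 0.\<close>

unbundle fps_syntax

lemma sum_triangle_lessThan:
  fixes X :: "nat \<Rightarrow> nat \<Rightarrow> 'a::comm_monoid_add"
  shows "(\<Sum>u<n. \<Sum>w<n. if u + w < n then X u w else 0) = (\<Sum>q<n. \<Sum>u\<le>q. X u (q - u))"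
proof -
  have "(\<Sum>u<n. \<Sum>w<n. if u + w < n then X u w else 0)
      = (\<Sum>(u, w)\<in>{..<n} \<times> {..<n}. if u + w < n then X u w else 0)"
    by (simp add: sum.cartesian_product)
  also have "\<dots> = (\<Sum>(u, w)\<in>{(u, w). u + w < n}. X u w)"
    by (rule sum.mono_neutral_cong_right) (auto split: if_splits)
  also have "\<dots> = (\<Sum>q<n. \<Sum>u\<le>q. X u (q - u))"
    by (rule sum.triangle_reindex)
  finally show ?thesis .
qed

lemma sum_swap_nested:
  "(\<Sum>a\<in>A. \<Sum>b\<in>B. \<Sum>c\<in>C. \<Sum>d\<in>D. f a b c d) = (\<Sum>c\<in>C. \<Sum>d\<in>D. \<Sum>a\<in>A. \<Sum>b\<in>B. f a b c d)"
proof -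
  have "(\<Sum>a\<in>A. \<Sum>b\<in>B. \<Sum>c\<in>C. \<Sum>d\<in>D. f a b c d) = (\<Sum>a\<in>A. \<Sum>c\<in>C. \<Sum>d\<in>D. \<Sum>b\<in>B. f a b c d)"
    by (intro sum.cong refl) (subst sum.swap, rule sum.cong[OF refl], rule sum.swap)
  also have "\<dots> = (\<Sum>c\<in>C. \<Sum>a\<in>A. \<Sum>d\<in>D. \<Sum>b\<in>B. f a b c d)"
    by (rule sum.swap)
  also have "\<dots> = (\<Sum>c\<in>C. \<Sum>d\<in>D. \<Sum>a\<in>A. \<Sum>b\<in>B. f a b c d)"
    by (intro sum.cong refl) (rule sum.swap)
  finally show ?thesis .
qed

subsection \<open>The series \<open>(1 - m X^m)^(-r/m)\<close>\<close>

text \<open>\<open>binser m r q\<close> is the coefficient of \<open>Y^q\<close> in \<open>(1 - m Y)^(-r/m)\<close>, so \<open>gser_coeff m r\<close> is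
  the coefficient sequence of \<open>G\<^sub>r = (1 - m X^m)^(-r/m)\<close>.\<close>

definition binser :: "nat \<Rightarrow> 'a::field_char_0 \<Rightarrow> nat \<Rightarrow> 'a" where
  "binser m r q = (- of_nat m) ^ q * ((- r / of_nat m) gchoose q)"

definition gser_coeff :: "nat \<Rightarrow> 'a::field_char_0 \<Rightarrow> nat \<Rightarrow> 'a" where
  "gser_coeff m r j = (if m dvd j then binser m r (j div m) else 0)"

definition gser :: "nat \<Rightarrow> 'a::field_char_0 \<Rightarrow> 'a fps" where
  "gser m r = Abs_fps (gser_coeff m r)"

lemma binser_convolution:
  assumes "m > 0"
  shows "(\<Sum>q\<le>J. binser m r q * binser m r' (J - q)) = binser m (r + r') J"
proof -
  have "(\<Sum>q\<le>J. binser m r q * binser m r' (J - q)) =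
        (\<Sum>q=0..J. (- of_nat m) ^ J * (((- r / of_nat m) gchoose q) * ((- r' / of_nat m) gchoose (J - q))))"
    by (rule sum.cong) (auto simp: binser_def power_add[symmetric])
  also have "\<dots> = (- of_nat m) ^ J * ((- r / of_nat m + - r' / of_nat m) gchoose J)"
    by (simp add: sum_distrib_left[symmetric] gbinomial_Vandermonde)
  also have "- r / of_nat m + - r' / of_nat m = - (r + r') / (of_nat m :: 'a)"
    using assms by (simp add: field_simps)
  finally show ?thesis by (simp add: binser_def)
qed

lemma binser_pochhammer:
  "m > 0 \<Longrightarrow> binser m r q = of_nat m ^ q * pochhammer (r / of_nat m) q / fact q"
  by (simp add: binser_def gbinomial_pochhammer power_mult_distrib[symmetric])

lemma binser_shift_commute:
  fixes r :: "'a::field_char_0"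
  assumes m: "m > 0"
  shows "binser m r L * binser m (r + of_nat m * of_nat L) J
       = binser m r J * binser m (r + of_nat m * of_nat J) L"
proof -
  have shift: "(r + of_nat m * of_nat L) / of_nat m = r / of_nat m + of_nat L" for L :: nat
    using m by (simp add: field_simps)
  have product: "pochhammer (r / of_nat m) L * pochhammer (r / of_nat m + of_nat L) J
      = pochhammer (r / of_nat m) (L + J)" for L J
    by (simp add: pochhammer_product')
  have "binser m r L * binser m (r + of_nat m * of_nat L) J
      = of_nat m ^ (L + J) * (pochhammer (r / of_nat m) L * pochhammer (r / of_nat m + of_nat L) J)
        / (fact L * fact J)"
    unfolding binser_pochhammer[OF m] shift by (simp add: power_add)
  also have "\<dots> = of_nat m ^ (J + L) * (pochhammer (r / of_nat m) J * pochhammer (r / of_nat m + of_nat J) L)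
        / (fact J * fact L)"
    unfolding product by (simp add: ac_simps)
  also have "\<dots> = binser m r J * binser m (r + of_nat m * of_nat J) L"
    unfolding binser_pochhammer[OF m] shift by (simp add: power_add)
  finally show ?thesis .
qed

lemma gser_coeff_convolution:
  assumes m: "m > 0"
  shows "(\<Sum>c\<le>j. gser_coeff m r c * gser_coeff m r' (j - c)) = gser_coeff m (r + r') j"
proof (cases "m dvd j")
  case True
  then obtain J where J: "j = m * J" by blast
  have "(\<Sum>c\<le>j. gser_coeff m r c * gser_coeff m r' (j - c))
      = (\<Sum>c\<in>(\<lambda>q. m * q) ` {..J}. gser_coeff m r c * gser_coeff m r' (j - c))"
  proof (rule sum.mono_neutral_right)
    show "\<forall>c\<in>{..j} - (\<lambda>q. m * q) ` {..J}. gser_coeff m r c * gser_coeff m r' (j - c) = 0"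
      using J m by (auto simp: gser_coeff_def elim!: dvdE)
  qed (use J in auto)
  also have "\<dots> = (\<Sum>q\<le>J. binser m r q * binser m r' (J - q))"
    using m J by (subst sum.reindex) (auto simp: inj_on_def gser_coeff_def diff_mult_distrib2[symmetric])
  also have "\<dots> = gser_coeff m (r + r') j"
    using J m by (simp add: binser_convolution gser_coeff_def)
  finally show ?thesis .
next
  case False
  have "\<not> (m dvd c \<and> m dvd (j - c))" if "c \<le> j" for c
    using False that dvd_add[of m c "j - c"] by auto
  then show ?thesis
    using False by (auto simp: gser_coeff_def intro!: sum.neutral)
qed

lemma gser_coeff_shift_commute:
  fixes r :: "'a::field_char_0"
  assumes m: "m > 0"
  shows "gser_coeff m r l * gser_coeff m (r + of_nat l) j = gser_coeff m r j * gser_coeff m (r + of_nat j) l"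
proof (cases "m dvd l \<and> m dvd j")
  case True
  then obtain L J where "l = m * L" "j = m * J" by blast
  then show ?thesis using m binser_shift_commute[OF m, of r L J] by (simp add: gser_coeff_def)
qed (auto simp: gser_coeff_def)

lemma gser_coeff_0 [simp]: "m > 0 \<Longrightarrow> gser_coeff m 0 j = (if j = 0 then 1 else 0)"
  by (auto simp: gser_coeff_def binser_def gbinomial_0_left elim!: dvdE)

lemma gser_coeff_nth_0 [simp]: "gser_coeff m r 0 = 1"
  by (simp add: gser_coeff_def binser_def)

lemma gser_coeff_self:
  "m > 0 \<Longrightarrow> gser_coeff m (of_nat m :: 'a::field_char_0) j = (if m dvd j then of_nat m ^ (j div m) else 0)"
  by (simp add: gser_coeff_def binser_pochhammer pochhammer_fact[symmetric])

lemma gser_mult: "m > 0 \<Longrightarrow> gser m r * gser m r' = gser m (r + r')"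
  by (rule fps_ext) (simp add: gser_def fps_mult_nth atLeast0AtMost gser_coeff_convolution)

lemma gser_power: "m > 0 \<Longrightarrow> gser m (1 :: 'a::field_char_0) ^ s = gser m (of_nat s)"
proof (induction s)
  case 0
  then show ?case by (simp add: gser_def fps_eq_iff)
next
  case (Suc s)
  then show ?case by (simp add: gser_mult add.commute)
qed

lemma gser_power_m:
  assumes m: "m > 0"
  shows "(1 - fps_const (of_nat m) * fps_X ^ m) * gser m 1 ^ m = (1 :: 'a::field_char_0 fps)"
proof -
  have "(1 - fps_const (of_nat m) * fps_X ^ m) * gser m (of_nat m) = (1 :: 'a fps)"
  proof (rule fps_ext)
    fix j
    show "((1 - fps_const (of_nat m) * fps_X ^ m) * gser m (of_nat m)) $ j = (1 :: 'a fps) $ j"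
    proof (cases "j < m")
      case True
      then show ?thesis
        using m by (auto simp: algebra_simps fps_X_power_mult_nth gser_def gser_coeff_self
                         dest: dvd_imp_le)
    next
      case False
      then have "m dvd (j - m) \<longleftrightarrow> m dvd j" and "j div m = Suc ((j - m) div m)"
        using m by (simp_all add: dvd_minus_self le_div_geq)
      then show ?thesis
        using m False by (simp add: algebra_simps fps_X_power_mult_nth gser_def gser_coeff_self)
    qed
  qed
  then show ?thesis by (simp add: gser_power m)
qed

subsection \<open>Coalgebra endomorphisms and conjugation\<close>

definition linmap :: "nat \<Rightarrow> (nat \<Rightarrow> nat \<Rightarrow> 'a::comm_ring_1) \<Rightarrow> 'a elt \<Rightarrow> 'a elt" where
  "linmap n T a = (\<lambda>k. if k < n then (\<Sum>v<n. a v * T v k) else 0)"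

definition coalg_endo :: "nat \<Rightarrow> (nat \<Rightarrow> nat \<Rightarrow> 'a::comm_ring_1) \<Rightarrow> bool" where
  "coalg_endo n T \<longleftrightarrow>
     (\<forall>q<n. \<forall>s<n. \<forall>t<n. (\<Sum>r\<le>q. T r s * T (q - r) t) = (if s + t < n then T q (s + t) else 0)) \<and>
     (\<forall>j<n. T j 0 = (if j = 0 then 1 else 0))"

definition conj_bilin ::
    "nat \<Rightarrow> (nat \<Rightarrow> nat \<Rightarrow> 'a::comm_ring_1) \<Rightarrow> (nat \<Rightarrow> nat \<Rightarrow> 'a) \<Rightarrow> 'a bilin \<Rightarrow> 'a bilin" where
  "conj_bilin n T S f = (\<lambda>i j k. \<Sum>r<n. (\<Sum>u<n. \<Sum>w<n. T i u * T j w * f u w r) * S r k)"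

lemma coalg_endoD:
  assumes "coalg_endo n T"
  shows "q < n \<Longrightarrow> s < n \<Longrightarrow> t < n \<Longrightarrow>
           (\<Sum>r\<le>q. T r s * T (q - r) t) = (if s + t < n then T q (s + t) else 0)"
    and "j < n \<Longrightarrow> T j 0 = (if j = 0 then 1 else 0)"
  using assms unfolding coalg_endo_def by blast+

lemma coalg_morD:
  assumes "coalg_mor n f" and "i < n" "j < n"
  shows "s < n \<Longrightarrow> t < n \<Longrightarrow>
           (\<Sum>a\<le>i. \<Sum>c\<le>j. f a c s * f (i - a) (j - c) t) = (if s + t < n then f i j (s + t) else 0)"
    and "f i j 0 = (if i = 0 \<and> j = 0 then 1 else 0)"
  using assms unfolding coalg_mor_def by auto

lemma coalg_mor_swap:
  assumes f: "coalg_mor n f"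
  shows "coalg_mor n (\<lambda>i j. f j i)"
  unfolding coalg_mor_def
proof (intro conjI allI impI)
  fix i j s t assume "i < n" "j < n" "s < n" "t < n"
  then show "(if s + t < n then f j i (s + t) else 0) = (\<Sum>a\<le>i. \<Sum>c\<le>j. f c a s * f (j - c) (i - a) t)"
    using coalg_morD(1)[OF f, of j i s t] by (simp add: sum.swap[of _ "{..i}"])
qed (use coalg_morD(2)[OF f] in auto)

lemma coalg_mor_precomp_left:
  assumes T: "coalg_endo n T" and f: "coalg_mor n f"
  shows "coalg_mor n (\<lambda>i j k. \<Sum>u<n. T i u * f u j k)"
  unfolding coalg_mor_def
proof (intro conjI allI impI)
  fix i j s t assume ijst: "i < n" "j < n" "s < n" "t < n"
  have "(\<Sum>a\<le>i. \<Sum>c\<le>j. (\<Sum>u<n. T a u * f u c s) * (\<Sum>u<n. T (i - a) u * f u (j - c) t))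
     = (\<Sum>a\<le>i. \<Sum>c\<le>j. \<Sum>u<n. \<Sum>u'<n. (T a u * T (i - a) u') * (f u c s * f u' (j - c) t))"
    by (simp add: sum_product mult_ac)
  also have "\<dots> = (\<Sum>u<n. \<Sum>u'<n. \<Sum>a\<le>i. \<Sum>c\<le>j. (T a u * T (i - a) u') * (f u c s * f u' (j - c) t))"
    by (rule sum_swap_nested)
  also have "\<dots> = (\<Sum>u<n. \<Sum>u'<n. (\<Sum>a\<le>i. T a u * T (i - a) u') * (\<Sum>c\<le>j. f u c s * f u' (j - c) t))"
    by (simp add: sum_product)
  also have "\<dots> = (\<Sum>u<n. \<Sum>u'<n. if u + u' < n then T i (u + u') * (\<Sum>c\<le>j. f u c s * f u' (j - c) t) else 0)"
    using ijst by (intro sum.cong refl) (simp add: coalg_endoD(1)[OF T])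
  also have "\<dots> = (\<Sum>U<n. \<Sum>u\<le>U. T i U * (\<Sum>c\<le>j. f u c s * f (U - u) (j - c) t))"
    by (subst sum_triangle_lessThan) simp
  also have "\<dots> = (if s + t < n then \<Sum>u<n. T i u * f u j (s + t) else 0)"
    using ijst by (simp add: sum_distrib_left[symmetric] coalg_morD(1)[OF f])
  finally show "(if s + t < n then \<Sum>u<n. T i u * f u j (s + t) else 0) =
      (\<Sum>a\<le>i. \<Sum>c\<le>j. (\<Sum>u<n. T a u * f u c s) * (\<Sum>u<n. T (i - a) u * f u (j - c) t))" by simp
next
  fix i j assume ij: "i < n" "j < n"
  have "(\<Sum>u<n. T i u * f u j 0) = (\<Sum>u<n. if u = 0 then T i 0 * f 0 j 0 else 0)"
    using ij by (intro sum.cong refl) (simp add: coalg_morD(2)[OF f])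
  then show "(\<Sum>u<n. T i u * f u j 0) = (if i = 0 \<and> j = 0 then 1 else 0)"
    using ij by (simp add: coalg_morD(2)[OF f] coalg_endoD(2)[OF T])
qed

lemma coalg_mor_precomp_right:
  assumes "coalg_endo n T" and "coalg_mor n f"
  shows "coalg_mor n (\<lambda>i j k. \<Sum>w<n. T j w * f i w k)"
  using coalg_mor_swap[OF coalg_mor_precomp_left[OF assms(1) coalg_mor_swap[OF assms(2)]]] by simp

lemma coalg_mor_postcomp:
  assumes S: "coalg_endo n S" and f: "coalg_mor n f"
  shows "coalg_mor n (\<lambda>i j k. \<Sum>r<n. f i j r * S r k)"
  unfolding coalg_mor_def
proof (intro conjI allI impI)
  fix i j s t assume ijst: "i < n" "j < n" "s < n" "t < n"
  have "(\<Sum>a\<le>i. \<Sum>c\<le>j. (\<Sum>r<n. f a c r * S r s) * (\<Sum>r<n. f (i - a) (j - c) r * S r t))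
      = (\<Sum>a\<le>i. \<Sum>c\<le>j. \<Sum>r<n. \<Sum>r'<n. S r s * S r' t * (f a c r * f (i - a) (j - c) r'))"
    by (simp add: sum_product mult_ac)
  also have "\<dots> = (\<Sum>r<n. \<Sum>r'<n. \<Sum>a\<le>i. \<Sum>c\<le>j. S r s * S r' t * (f a c r * f (i - a) (j - c) r'))"
    by (rule sum_swap_nested)
  also have "\<dots> = (\<Sum>r<n. \<Sum>r'<n. if r + r' < n then S r s * S r' t * f i j (r + r') else 0)"
    using ijst by (intro sum.cong refl) (simp add: sum_distrib_left[symmetric] coalg_morD(1)[OF f])
  also have "\<dots> = (\<Sum>q<n. \<Sum>r\<le>q. S r s * S (q - r) t * f i j q)"
    by (subst sum_triangle_lessThan) simp
  also have "\<dots> = (\<Sum>q<n. (if s + t < n then S q (s + t) else 0) * f i j q)"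
    using ijst by (intro sum.cong refl) (simp add: sum_distrib_right[symmetric] coalg_endoD(1)[OF S])
  also have "\<dots> = (if s + t < n then \<Sum>r<n. f i j r * S r (s + t) else 0)"
    by (simp add: mult.commute)
  finally show "(if s + t < n then \<Sum>r<n. f i j r * S r (s + t) else 0) =
      (\<Sum>a\<le>i. \<Sum>c\<le>j. (\<Sum>r<n. f a c r * S r s) * (\<Sum>r<n. f (i - a) (j - c) r * S r t))" by simp
next
  fix i j assume ij: "i < n" "j < n"
  have "(\<Sum>r<n. f i j r * S r 0) = (\<Sum>r<n. if r = 0 then f i j 0 else 0)"
    by (intro sum.cong refl) (simp add: coalg_endoD(2)[OF S])
  then show "(\<Sum>r<n. f i j r * S r 0) = (if i = 0 \<and> j = 0 then 1 else 0)"
    using ij by (simp add: coalg_morD(2)[OF f])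
qed

lemma coalg_mor_conj_bilin:
  assumes "coalg_endo n T" and "coalg_endo n S" and "coalg_mor n f"
  shows "coalg_mor n (conj_bilin n T S f)"
proof -
  have "coalg_mor n (\<lambda>i j k. \<Sum>r<n. (\<Sum>u<n. T i u * (\<Sum>w<n. T j w * f u w r)) * S r k)"
    using assms by (intro coalg_mor_postcomp coalg_mor_precomp_left coalg_mor_precomp_right)
  then show ?thesis
    by (simp add: conj_bilin_def sum_distrib_left mult.assoc)
qed

lemma sum_bx_mult: "j < n \<Longrightarrow> (\<Sum>l<n. bx j l * g l) = (g j :: 'a::comm_ring_1)"
  by (simp add: bx_def if_distrib if_distribR cong: if_cong)

lemma sum_product_mult:
  "(\<Sum>i\<in>A. a i) * (\<Sum>j\<in>B. b j) * (c :: 'a::comm_ring_1) = (\<Sum>i\<in>A. \<Sum>j\<in>B. a i * b j * c)"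
  by (simp only: sum_product) (simp only: sum_distrib_right)

lemma app_bx_right: "j < n \<Longrightarrow> k < n \<Longrightarrow> app n f a (bx j) k = (\<Sum>i<n. a i * f i j k)"
  by (simp add: app_def mult.assoc sum_bx_mult sum_distrib_left[symmetric])

lemma app_restrict_left: "app n f (\<lambda>k. if k < n then a k else 0) b = app n f a b"
  unfolding app_def by (intro ext if_cong refl sum.cong) auto

lemma app_restrict_right: "app n f a (\<lambda>k. if k < n then b k else 0) = app n f a b"
  unfolding app_def by (intro ext if_cong refl sum.cong) auto

definition coord_linear :: "nat \<Rightarrow> ('a::comm_ring_1 elt \<Rightarrow> 'a elt) \<Rightarrow> bool" where
  "coord_linear n G \<longleftrightarrow> (\<forall>x k. k < n \<longrightarrow> G x k = (\<Sum>i<n. x i * G (bx i) k))"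

definition coord_bilinear :: "nat \<Rightarrow> ('a::comm_ring_1 elt \<Rightarrow> 'a elt \<Rightarrow> 'a elt) \<Rightarrow> bool" where
  "coord_bilinear n H \<longleftrightarrow>
     (\<forall>x y k. k < n \<longrightarrow> H x y k = (\<Sum>i<n. \<Sum>j<n. x i * y j * H (bx i) (bx j) k))"

lemma coord_linear_id: "coord_linear n (\<lambda>x. x)"
  unfolding coord_linear_def by (auto simp: bx_def if_distrib cong: if_cong)

lemma coord_linear_app: "coord_linear n (app n f a)"
  unfolding coord_linear_def
proof (intro allI impI)
  fix x k assume k: "(k::nat) < n"
  have "app n f a x k = (\<Sum>i<n. \<Sum>j<n. a i * x j * f i j k)"
    using k by (simp add: app_def)
  also have "\<dots> = (\<Sum>j<n. \<Sum>i<n. x j * (a i * f i j k))"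
    by (subst sum.swap) (simp add: mult_ac)
  also have "\<dots> = (\<Sum>j<n. x j * app n f a (bx j) k)"
    using k by (simp add: app_bx_right sum_distrib_left)
  finally show "app n f a x k = (\<Sum>i<n. x i * app n f a (bx i) k)" .
qed

lemma coord_bilinear_app:
  assumes G: "coord_linear n G" and G': "coord_linear n G'"
  shows "coord_bilinear n (\<lambda>x y. app n f (G x) (G' y))"
  unfolding coord_bilinear_def
proof (intro allI impI)
  fix x y k assume k: "(k::nat) < n"
  have "app n f (G x) (G' y) k
      = (\<Sum>u<n. \<Sum>w<n. (\<Sum>i<n. x i * G (bx i) u) * (\<Sum>j<n. y j * G' (bx j) w) * f u w k)"
    using k G G' unfolding coord_linear_def by (simp add: app_def)
  also have "\<dots> = (\<Sum>u<n. \<Sum>w<n. \<Sum>i<n. \<Sum>j<n. x i * y j * (G (bx i) u * G' (bx j) w * f u w k))"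
    unfolding sum_product_mult by (intro sum.cong refl) (simp add: mult_ac)
  also have "\<dots> = (\<Sum>i<n. \<Sum>j<n. \<Sum>u<n. \<Sum>w<n. x i * y j * (G (bx i) u * G' (bx j) w * f u w k))"
    by (rule sum_swap_nested)
  also have "\<dots> = (\<Sum>i<n. \<Sum>j<n. x i * y j * app n f (G (bx i)) (G' (bx j)) k)"
    using k by (simp add: app_def sum_distrib_left)
  finally show "app n f (G x) (G' y) k
      = (\<Sum>i<n. \<Sum>j<n. x i * y j * app n f (G (bx i)) (G' (bx j)) k)" .
qed

lemma coord_bilinear_swap: "coord_bilinear n H \<Longrightarrow> coord_bilinear n (\<lambda>x y. H y x)"
  unfolding coord_bilinear_def by (subst sum.swap) (simp add: mult_ac)

lemma sweedler_swap: "sweedler n F b = sweedler n (\<lambda>x y. F y x) b"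
proof -
  have "(\<Sum>s\<le>j. F (bx s) (bx (j - s)) k) = (\<Sum>s\<le>j. F (bx (j - s)) (bx s) k)" for j k
    by (rule sum.reindex_bij_witness[where i = "\<lambda>s. j - s" and j = "\<lambda>s. j - s"]) auto
  then show ?thesis
    by (simp add: sweedler_def)
qed

lemma linmap_bx: "s < n \<Longrightarrow> linmap n T (bx s) = (\<lambda>u. if u < n then T s u else 0)"
  by (auto simp: linmap_def sum_bx_mult)

lemma linmap_cong: "(\<And>v. v < n \<Longrightarrow> a v = a' v) \<Longrightarrow> linmap n S a = linmap n S a'"
  unfolding linmap_def by (intro ext if_cong refl sum.cong) auto

lemma linmap_scale: "linmap n S (\<lambda>v. c * a v) k = c * linmap n S a k"
  by (simp add: linmap_def sum_distrib_left mult_ac)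

lemma linmap_nth_0: "coalg_endo n T \<Longrightarrow> 0 < n \<Longrightarrow> linmap n T b 0 = b 0"
  by (simp add: linmap_def coalg_endoD(2) if_distrib cong: if_cong)

lemma linmap_inverse:
  assumes "\<forall>u<n. \<forall>k<n. (\<Sum>v<n. S u v * T v k) = (if u = k then 1 else 0)"
  shows "linmap n T (linmap n S x) = (\<lambda>k. if k < n then x k else 0)"
proof
  fix k
  show "linmap n T (linmap n S x) k = (if k < n then x k else 0)"
  proof (cases "k < n")
    case True
    have "linmap n T (linmap n S x) k = (\<Sum>v<n. \<Sum>u<n. x u * (S u v * T v k))"
      using True by (simp add: linmap_def sum_distrib_left sum_distrib_right mult_ac)
    also have "\<dots> = (\<Sum>u<n. x u * (\<Sum>v<n. S u v * T v k))"
      by (subst sum.swap) (simp add: sum_distrib_left)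
    also have "\<dots> = (\<Sum>u<n. if u = k then x k else 0)"
      using True assms by (intro sum.cong refl) auto
    finally show ?thesis using True by simp
  qed (simp add: linmap_def)
qed

text \<open>\<open>T\<close> commutes with comultiplication, so it can be pulled out of both Sweedler legs.\<close>

lemma sweedler_linmap:
  assumes T: "coalg_endo n T" and H: "coord_bilinear n H" and k: "k < n"
  shows "sweedler n (\<lambda>x y. H (linmap n T x) (linmap n T y)) b k = sweedler n H (linmap n T b) k"
proof -
  define h where "h u w = H (bx u) (bx w) k" for u w
  have Hx: "H (linmap n T (bx s)) (linmap n T (bx t)) k = (\<Sum>u<n. \<Sum>w<n. T s u * T t w * h u w)"
    if "s < n" "t < n" for s t
    using H k that unfolding coord_bilinear_def h_def by (simp add: linmap_bx)
  have "sweedler n (\<lambda>x y. H (linmap n T x) (linmap n T y)) b k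
      = (\<Sum>j<n. b j * (\<Sum>s\<le>j. \<Sum>u<n. \<Sum>w<n. T s u * T (j - s) w * h u w))"
    unfolding sweedler_def by (intro sum.cong refl arg_cong2[where f = "(*)"]) (simp add: Hx)
  also have "\<dots> = (\<Sum>j<n. b j * (\<Sum>u<n. \<Sum>w<n. (\<Sum>s\<le>j. T s u * T (j - s) w) * h u w))"
  proof (rule sum.cong[OF refl], rule arg_cong2[where f = "(*)"], rule refl)
    fix j
    have "(\<Sum>s\<le>j. \<Sum>u<n. \<Sum>w<n. T s u * T (j - s) w * h u w)
        = (\<Sum>u<n. \<Sum>w<n. \<Sum>s\<le>j. T s u * T (j - s) w * h u w)"
      by (subst sum.swap, rule sum.cong[OF refl], rule sum.swap)
    then show "(\<Sum>s\<le>j. \<Sum>u<n. \<Sum>w<n. T s u * T (j - s) w * h u w)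
        = (\<Sum>u<n. \<Sum>w<n. (\<Sum>s\<le>j. T s u * T (j - s) w) * h u w)"
      by (simp add: sum_distrib_right)
  qed
  also have "\<dots> = (\<Sum>j<n. b j * (\<Sum>u<n. \<Sum>w<n. if u + w < n then T j (u + w) * h u w else 0))"
    by (intro sum.cong refl arg_cong2[where f = "(*)"]) (simp add: coalg_endoD(1)[OF T])
  also have "\<dots> = (\<Sum>q<n. \<Sum>j<n. b j * T j q * (\<Sum>u\<le>q. h u (q - u)))"
    by (subst sum_triangle_lessThan, subst sum.swap) (simp add: sum_distrib_left mult_ac)
  also have "\<dots> = sweedler n H (linmap n T b) k"
    unfolding sweedler_def h_def by (simp add: linmap_def sum_distrib_right)
  finally show ?thesis .
qed

lemma linmap_sweedler:
  assumes k: "k < n"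
  shows "sweedler n (\<lambda>x y. linmap n S (G x y)) b k = linmap n S (sweedler n G b) k"
proof -
  have "sweedler n (\<lambda>x y. linmap n S (G x y)) b k
      = (\<Sum>j<n. \<Sum>s\<le>j. \<Sum>v<n. b j * (G (bx s) (bx (j - s)) v * S v k))"
    using k by (simp add: sweedler_def linmap_def sum_distrib_left)
  also have "\<dots> = (\<Sum>v<n. \<Sum>j<n. \<Sum>s\<le>j. b j * (G (bx s) (bx (j - s)) v * S v k))"
    by (subst sum.swap, rule sum.cong[OF refl], rule sum.swap)
  also have "\<dots> = linmap n S (sweedler n G b) k"
    using k by (simp add: sweedler_def linmap_def sum_distrib_left sum_distrib_right mult_ac)
  finally show ?thesis .
qed

lemma sweedler_linmap_conj:
  assumes T: "coalg_endo n T" and H: "coord_bilinear n H" and k: "k < n"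
  shows "sweedler n (\<lambda>x y. linmap n S (H (linmap n T x) (linmap n T y))) b k
       = linmap n S (sweedler n H (linmap n T b)) k"
proof -
  have "sweedler n (\<lambda>x y. linmap n S (H (linmap n T x) (linmap n T y))) b k
      = linmap n S (sweedler n (\<lambda>x y. H (linmap n T x) (linmap n T y)) b) k"
    by (rule linmap_sweedler[OF k])
  also have "\<dots> = linmap n S (sweedler n H (linmap n T b)) k"
    by (rule arg_cong[where f = "\<lambda>z. z k"], rule linmap_cong, rule sweedler_linmap[OF T H])
  finally show ?thesis .
qed

lemma app_conj_bilin:
  "app n (conj_bilin n T S f) a b = linmap n S (app n f (linmap n T a) (linmap n T b))"
proof
  fix k
  show "app n (conj_bilin n T S f) a b k = linmap n S (app n f (linmap n T a) (linmap n T b)) k"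
  proof (cases "k < n")
    case k: True
    have "linmap n S (app n f (linmap n T a) (linmap n T b)) k
       = (\<Sum>r<n. (\<Sum>u<n. \<Sum>w<n. (\<Sum>i<n. a i * T i u) * (\<Sum>j<n. b j * T j w) * f u w r) * S r k)"
      using k by (simp add: linmap_def app_def)
    also have "\<dots> = (\<Sum>r<n. (\<Sum>u<n. \<Sum>w<n. \<Sum>i<n. \<Sum>j<n. a i * b j * (T i u * T j w * f u w r)) * S r k)"
      unfolding sum_product_mult by (simp add: mult_ac)
    also have "\<dots> = (\<Sum>r<n. (\<Sum>i<n. \<Sum>j<n. \<Sum>u<n. \<Sum>w<n. a i * b j * (T i u * T j w * f u w r)) * S r k)"
      by (subst sum_swap_nested) (rule refl)
    also have "\<dots> = (\<Sum>r<n. \<Sum>i<n. \<Sum>j<n. a i * b j * ((\<Sum>u<n. \<Sum>w<n. T i u * T j w * f u w r) * S r k))"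
      by (simp add: sum_distrib_left sum_distrib_right mult_ac)
    also have "\<dots> = (\<Sum>i<n. \<Sum>j<n. \<Sum>r<n. a i * b j * ((\<Sum>u<n. \<Sum>w<n. T i u * T j w * f u w r) * S r k))"
      by (subst sum.swap, rule sum.cong[OF refl], rule sum.swap)
    also have "\<dots> = app n (conj_bilin n T S f) a b k"
      using k by (simp add: app_def conj_bilin_def sum_distrib_left)
    finally show ?thesis by simp
  qed (simp add: app_def linmap_def)
qed

subsection \<open>The model cycle coalgebra and its conjugates\<close>

definition model_prod :: "nat \<Rightarrow> (nat \<Rightarrow> 'a::field_char_0) \<Rightarrow> 'a bilin" where
  "model_prod m \<sigma> = (\<lambda>i j k. if i = k then gser_coeff m (\<sigma> k) j else 0)"

lemma app_model_prod:
  assumes k: "k < n"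
  shows "app n (model_prod m \<sigma>) x y k = x k * (\<Sum>j<n. y j * gser_coeff m (\<sigma> k) j)"
proof -
  have "app n (model_prod m \<sigma>) x y k
      = (\<Sum>i<n. \<Sum>j<n. x i * y j * (if i = k then gser_coeff m (\<sigma> k) j else 0))"
    using k by (simp add: app_def model_prod_def)
  also have "\<dots> = (\<Sum>i<n. if i = k then (\<Sum>j<n. x k * y j * gser_coeff m (\<sigma> k) j) else 0)"
    by (rule sum.cong) auto
  finally show ?thesis
    using k by (simp add: sum_distrib_left mult.assoc)
qed

lemma app_model_prod_bx:
  "k < n \<Longrightarrow> s < n \<Longrightarrow> app n (model_prod m \<sigma>) x (bx s) k = x k * gser_coeff m (\<sigma> k) s"
  by (simp add: app_model_prod sum_bx_mult)

lemma coalg_mor_model_prod: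
  assumes m: "m > 0" and additive: "\<And>s t. \<sigma> (s + t) = \<sigma> s + \<sigma> t"
  shows "coalg_mor n (model_prod m \<sigma>)"
  unfolding coalg_mor_def
proof (intro conjI allI impI)
  fix i j s t assume ijst: "i < n" "j < n" "s < n" "t < n"
  have "(\<Sum>a\<le>i. \<Sum>c\<le>j. model_prod m \<sigma> a c s * model_prod m \<sigma> (i - a) (j - c) t)
      = (\<Sum>a\<le>i. if a = s then (if i - s = t then
           (\<Sum>c\<le>j. gser_coeff m (\<sigma> s) c * gser_coeff m (\<sigma> t) (j - c)) else 0) else 0)"
    unfolding model_prod_def by (intro sum.cong refl) auto
  also have "\<dots> = (if s + t < n then model_prod m \<sigma> i j (s + t) else 0)"
    using ijst m by (auto simp: model_prod_def additive gser_coeff_convolution)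
  finally show "(if s + t < n then model_prod m \<sigma> i j (s + t) else 0)
      = (\<Sum>a\<le>i. \<Sum>c\<le>j. model_prod m \<sigma> a c s * model_prod m \<sigma> (i - a) (j - c) t)" by simp
next
  fix i j
  have "\<sigma> 0 = 0" using additive[of 0 0] by simp
  then show "model_prod m \<sigma> i j 0 = (if i = 0 \<and> j = 0 then 1 else 0)"
    using m by (simp add: model_prod_def)
qed

lemma sweedler_model_prod_inverse:
  assumes m: "m > 0" and k: "k < n" and inverse: "\<sigma>' k + \<sigma> k = 0"
  shows "sweedler n (\<lambda>x y. app n (model_prod m \<sigma>') (app n (model_prod m \<sigma>) a x) y) b k = b 0 * a k"
proof -
  have "sweedler n (\<lambda>x y. app n (model_prod m \<sigma>') (app n (model_prod m \<sigma>) a x) y) b k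
      = (\<Sum>j<n. b j * (a k * (\<Sum>s\<le>j. gser_coeff m (\<sigma> k) s * gser_coeff m (\<sigma>' k) (j - s))))"
    unfolding sweedler_def using k
    by (intro sum.cong refl arg_cong2[where f = "(*)"]) (simp add: app_model_prod_bx sum_distrib_left mult_ac)
  also have "\<dots> = (\<Sum>j<n. if j = 0 then b 0 * a k else 0)"
    using m inverse by (intro sum.cong refl) (simp add: gser_coeff_convolution add.commute)
  also have "\<dots> = b 0 * a k" using k by simp
  finally show ?thesis .
qed

lemma sweedler_model_prod_nested:
  fixes a b c :: "'a::field_char_0 elt"
  assumes m: "m > 0" and k: "k < n"
  defines "p \<equiv> model_prod m of_nat"
  shows "sweedler n (\<lambda>x y. app n p (app n p a x) (app n p c y)) b k
    = a k * (\<Sum>j<n. \<Sum>w<n. b j * c w * (gser_coeff m (of_nat k) w * gser_coeff m (of_nat k + of_nat w) j))"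
proof -
  have "sweedler n (\<lambda>x y. app n p (app n p a x) (app n p c y)) b k
      = (\<Sum>j<n. b j * (\<Sum>s\<le>j. a k * gser_coeff m (of_nat k) s *
           (\<Sum>w<n. c w * gser_coeff m (of_nat w) (j - s) * gser_coeff m (of_nat k) w)))"
    unfolding sweedler_def p_def using k
    by (intro sum.cong refl arg_cong2[where f = "(*)"]) (simp add: app_model_prod app_model_prod_bx sum_bx_mult)
  also have "\<dots> = a k * (\<Sum>j<n. \<Sum>w<n. b j * c w * gser_coeff m (of_nat k) w *
           (\<Sum>s\<le>j. gser_coeff m (of_nat k) s * gser_coeff m (of_nat w) (j - s)))"
  proof -
    have "(\<Sum>s\<le>j. a k * gser_coeff m (of_nat k) s *
            (\<Sum>w<n. c w * gser_coeff m (of_nat w) (j - s) * gser_coeff m (of_nat k) w))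
        = (\<Sum>w<n. \<Sum>s\<le>j. a k * gser_coeff m (of_nat k) s *
            (c w * gser_coeff m (of_nat w) (j - s) * gser_coeff m (of_nat k) w))" for j
      by (simp add: sum_distrib_left) (rule sum.swap)
    then show ?thesis
      by (simp add: sum_distrib_left sum_distrib_right mult_ac)
  qed
  also have "\<dots> = a k * (\<Sum>j<n. \<Sum>w<n. b j * c w *
           (gser_coeff m (of_nat k) w * gser_coeff m (of_nat k + of_nat w) j))"
    using m by (simp add: gser_coeff_convolution mult_ac)
  finally show ?thesis .
qed

lemma sweedler_model_prod_cycle:
  fixes a b c :: "'a::field_char_0 elt"
  assumes m: "m > 0" and k: "k < n"
  defines "p \<equiv> model_prod m of_nat"
  shows "sweedler n (\<lambda>x y. app n p (app n p a x) (app n p c y)) b k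
       = sweedler n (\<lambda>x y. app n p (app n p a y) (app n p b x)) c k"
proof -
  have commute: "c j * b w * (gser_coeff m (of_nat k) w * gser_coeff m (of_nat k + of_nat w) j)
      = b w * c j * (gser_coeff m (of_nat k) j * gser_coeff m (of_nat k + of_nat j) w)" for j w
    by (subst gser_coeff_shift_commute[OF m]) (simp add: ac_simps)
  have "sweedler n (\<lambda>x y. app n p (app n p a y) (app n p b x)) c k
      = a k * (\<Sum>j<n. \<Sum>w<n. c j * b w * (gser_coeff m (of_nat k) w * gser_coeff m (of_nat k + of_nat w) j))"
    unfolding p_def by (subst sweedler_swap) (simp add: sweedler_model_prod_nested[OF m k])
  also have "\<dots> = a k * (\<Sum>j<n. \<Sum>w<n. b j * c w * (gser_coeff m (of_nat k) w * gser_coeff m (of_nat k + of_nat w) j))"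
    by (subst sum.swap) (simp only: commute)
  also have "\<dots> = sweedler n (\<lambda>x y. app n p (app n p a x) (app n p c y)) b k"
    unfolding p_def by (rule sweedler_model_prod_nested[OF m k, symmetric])
  finally show ?thesis by simp
qed

locale coalg_auto =
  fixes n :: nat and T S :: "nat \<Rightarrow> nat \<Rightarrow> 'a::field_char_0"
  assumes n_pos: "0 < n"
    and endo_T: "coalg_endo n T" and endo_S: "coalg_endo n S"
    and inverse_ST: "\<forall>u<n. \<forall>k<n. (\<Sum>v<n. S u v * T v k) = (if u = k then 1 else 0)"
    and inverse_TS: "\<forall>u<n. \<forall>k<n. (\<Sum>v<n. T u v * S v k) = (if u = k then 1 else 0)"
begin

lemma linmap_T_S: "linmap n T (linmap n S x) = (\<lambda>k. if k < n then x k else 0)"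
  by (rule linmap_inverse[OF inverse_ST])

lemma linmap_S_T: "linmap n S (linmap n T x) = (\<lambda>k. if k < n then x k else 0)"
  by (rule linmap_inverse[OF inverse_TS])

lemma sweedler_conj_model_prod_inverse:
  assumes m: "m > 0" and inverse: "\<And>k. \<sigma>' k + \<sigma> k = 0" and k: "k < n"
  shows "sweedler n (\<lambda>b1 b2. app n (conj_bilin n T S (model_prod m \<sigma>'))
           (app n (conj_bilin n T S (model_prod m \<sigma>)) a b1) b2) b k = b 0 * a k"
proof -
  define H where "H = (\<lambda>x y. app n (model_prod m \<sigma>') (app n (model_prod m \<sigma>) (linmap n T a) x) y)"
  have "coord_bilinear n H"
    using coord_bilinear_app[where G = "app n (model_prod m \<sigma>) (linmap n T a)" and G' = "\<lambda>x. x",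
        OF coord_linear_app coord_linear_id]
    by (simp add: H_def)
  have "sweedler n (\<lambda>b1 b2. app n (conj_bilin n T S (model_prod m \<sigma>'))
          (app n (conj_bilin n T S (model_prod m \<sigma>)) a b1) b2) b k
      = sweedler n (\<lambda>b1 b2. linmap n S (H (linmap n T b1) (linmap n T b2))) b k"
    by (simp add: app_conj_bilin linmap_T_S app_restrict_left app_restrict_right H_def)
  also have "\<dots> = linmap n S (sweedler n H (linmap n T b)) k"
    by (rule sweedler_linmap_conj[OF endo_T \<open>coord_bilinear n H\<close> k])
  also have "\<dots> = linmap n S (\<lambda>v. linmap n T b 0 * linmap n T a v) k"
    unfolding H_def
    by (rule arg_cong[where f = "\<lambda>z. z k"], rule linmap_cong, rule sweedler_model_prod_inverse[OF m _ inverse])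
  also have "\<dots> = b 0 * a k"
    using k by (simp add: linmap_scale linmap_S_T linmap_nth_0[OF endo_T n_pos])
  finally show ?thesis .
qed

lemma sweedler_conj_model_prod_cycle:
  assumes m: "m > 0" and k: "k < n"
  defines "p \<equiv> conj_bilin n T S (model_prod m of_nat)"
  shows "sweedler n (\<lambda>b1 b2. app n p (app n p a b1) (app n p c b2)) b k
       = sweedler n (\<lambda>c1 c2. app n p (app n p a c2) (app n p b c1)) c k"
proof -
  let ?P = "model_prod m (of_nat :: nat \<Rightarrow> 'a)"
  define H1 where "H1 = (\<lambda>x y. app n ?P (app n ?P (linmap n T a) x) (app n ?P (linmap n T c) y))"
  define H2 where "H2 = (\<lambda>x y. app n ?P (app n ?P (linmap n T a) y) (app n ?P (linmap n T b) x))"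
  have bilinear_H1: "coord_bilinear n H1"
    unfolding H1_def by (intro coord_bilinear_app coord_linear_app)
  have bilinear_H2: "coord_bilinear n H2"
    unfolding H2_def
    by (rule coord_bilinear_swap[where H = "\<lambda>x y. app n ?P (app n ?P (linmap n T a) x) (app n ?P (linmap n T b) y)"])
      (intro coord_bilinear_app coord_linear_app)
  have "sweedler n (\<lambda>b1 b2. app n p (app n p a b1) (app n p c b2)) b k
      = sweedler n (\<lambda>b1 b2. linmap n S (H1 (linmap n T b1) (linmap n T b2))) b k"
    by (simp add: p_def app_conj_bilin linmap_T_S app_restrict_left app_restrict_right H1_def)
  also have "\<dots> = linmap n S (sweedler n H1 (linmap n T b)) k"
    by (rule sweedler_linmap_conj[OF endo_T bilinear_H1 k])
  also have "\<dots> = linmap n S (sweedler n H2 (linmap n T c)) k"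
    unfolding H1_def H2_def
    by (rule arg_cong[where f = "\<lambda>z. z k"], rule linmap_cong, rule sweedler_model_prod_cycle[OF m])
  also have "\<dots> = sweedler n (\<lambda>b1 b2. linmap n S (H2 (linmap n T b1) (linmap n T b2))) c k"
    by (rule sweedler_linmap_conj[OF endo_T bilinear_H2 k, symmetric])
  also have "\<dots> = sweedler n (\<lambda>c1 c2. app n p (app n p a c2) (app n p b c1)) c k"
    by (simp add: p_def app_conj_bilin linmap_T_S app_restrict_left app_restrict_right H2_def)
  finally show ?thesis .
qed

lemma cycle_coalgebra_conj_model_prod:
  assumes m: "m > 0"
  shows "cycle_coalgebra n (conj_bilin n T S (model_prod m of_nat))"
proof -
  let ?p = "conj_bilin n T S (model_prod m (of_nat :: nat \<Rightarrow> 'a))"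
  let ?u = "conj_bilin n T S (model_prod m (\<lambda>k. - (of_nat k :: 'a)))"
  have mor_p: "coalg_mor n ?p" and mor_u: "coalg_mor n ?u"
    using m by (intro coalg_mor_conj_bilin[OF endo_T endo_S] coalg_mor_model_prod; simp)+
  have div_p: "eqC n (sweedler n (\<lambda>b1 b2. app n ?p (app n ?u a b1) b2) b) (smul (cou b) a)"
    and div_u: "eqC n (sweedler n (\<lambda>b1 b2. app n ?u (app n ?p a b1) b2) b) (smul (cou b) a)" for a b
    unfolding eqC_def smul_def cou_def using m by (auto intro: sweedler_conj_model_prod_inverse)
  have cycle: "eqC n (sweedler n (\<lambda>b1 b2. app n ?p (app n ?p a b1) (app n ?p c b2)) b)
                 (sweedler n (\<lambda>c1 c2. app n ?p (app n ?p a c2) (app n ?p b c1)) c)" for a b c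
    unfolding eqC_def using sweedler_conj_model_prod_cycle[OF m] by blast
  show ?thesis
    unfolding cycle_coalgebra_def regular_q_cycle_def regular_q_magma_def
  proof (intro conjI allI exI[of _ ?u] mor_p mor_u div_p div_u cycle)
    fix a b
    show "eqC n (sweedler n (\<lambda>b1 b2. app n ?u (app n ?p a b2) b1) b) (smul (cou b) a)"
      using div_u by (subst sweedler_swap) simp
    show "eqC n (sweedler n (\<lambda>b1 b2. app n ?p (app n ?u a b2) b1) b) (smul (cou b) a)"
      using div_p by (subst sweedler_swap) simp
  qed
qed

end

subsection \<open>Conjugating by a substitution\<close>

text \<open>\<open>subst_matrix \<phi>\<close> is the transpose of the algebra endomorphism \<open>y \<mapsto> \<phi>(y)\<close> of \<open>K[y]/(y^n)\<close>.\<close>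

definition subst_matrix :: "'a::comm_ring_1 fps \<Rightarrow> nat \<Rightarrow> nat \<Rightarrow> 'a" where
  "subst_matrix \<phi> j k = (\<phi> ^ k) $ j"

lemma fps_power_nth_below: "\<phi> $ 0 = 0 \<Longrightarrow> q < k \<Longrightarrow> (\<phi> ^ k) $ q = (0 :: 'a::idom)"
  using startsby_zero_power_prefix[of \<phi> k] by blast

lemma coalg_endo_subst_matrix:
  fixes \<phi> :: "'a::idom fps"
  assumes \<phi>0: "\<phi> $ 0 = 0"
  shows "coalg_endo n (subst_matrix \<phi>)"
  unfolding coalg_endo_def
proof (intro conjI allI impI)
  fix q s t assume qst: "q < n" "s < n" "t < n"
  have "(\<Sum>r\<le>q. subst_matrix \<phi> r s * subst_matrix \<phi> (q - r) t) = (\<phi> ^ (s + t)) $ q"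
    by (simp add: subst_matrix_def fps_mult_nth atLeast0AtMost power_add)
  also have "\<dots> = (if s + t < n then subst_matrix \<phi> q (s + t) else 0)"
    using qst fps_power_nth_below[OF \<phi>0, of q "s + t"] by (auto simp: subst_matrix_def)
  finally show "(\<Sum>r\<le>q. subst_matrix \<phi> r s * subst_matrix \<phi> (q - r) t)
      = (if s + t < n then subst_matrix \<phi> q (s + t) else 0)" .
qed (simp add: subst_matrix_def)

lemma subst_matrix_inverse:
  fixes \<phi> \<psi> :: "'a::idom fps"
  assumes \<phi>0: "\<phi> $ 0 = 0" and \<psi>0: "\<psi> $ 0 = 0" and comp: "\<phi> oo \<psi> = fps_X"
  shows "\<forall>u<n. \<forall>k<n. (\<Sum>v<n. subst_matrix \<psi> u v * subst_matrix \<phi> v k) = (if u = k then 1 else 0)"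
proof (intro allI impI)
  fix u k assume uk: "u < n" "k < n"
  have "(\<Sum>v<n. subst_matrix \<psi> u v * subst_matrix \<phi> v k) = (\<Sum>v=0..u. (\<phi> ^ k) $ v * (\<psi> ^ v) $ u)"
  proof (rule sum.mono_neutral_cong_right)
    show "\<forall>v\<in>{..<n} - {0..u}. subst_matrix \<psi> u v * subst_matrix \<phi> v k = 0"
      using fps_power_nth_below[OF \<psi>0] by (auto simp: subst_matrix_def)
  qed (use uk in \<open>auto simp: subst_matrix_def\<close>)
  also have "\<dots> = ((\<phi> oo \<psi>) ^ k) $ u"
    by (simp add: fps_compose_nth fps_compose_power[OF \<psi>0])
  also have "\<dots> = (if u = k then 1 else 0)"
    by (simp add: comp)
  finally show "(\<Sum>v<n. subst_matrix \<psi> u v * subst_matrix \<phi> v k) = (if u = k then 1 else 0)" .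
qed

lemma coalg_auto_subst_matrix:
  fixes \<phi> :: "'a::field_char_0 fps"
  assumes n: "0 < n" and \<phi>0: "\<phi> $ 0 = 0" and \<phi>1: "\<phi> $ 1 \<noteq> 0"
  shows "coalg_auto n (subst_matrix \<phi>) (subst_matrix (fps_inv \<phi>))"
proof -
  have \<psi>0: "fps_inv \<phi> $ 0 = 0"
    by (simp add: fps_inv_def)
  show ?thesis
  proof
    show "\<forall>u<n. \<forall>k<n. (\<Sum>v<n. subst_matrix (fps_inv \<phi>) u v * subst_matrix \<phi> v k) = (if u = k then 1 else 0)"
      using \<phi>0 \<phi>1 \<psi>0 by (intro subst_matrix_inverse fps_inv_right)
    show "\<forall>u<n. \<forall>k<n. (\<Sum>v<n. subst_matrix \<phi> u v * subst_matrix (fps_inv \<phi>) v k) = (if u = k then 1 else 0)"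
      using \<phi>0 \<phi>1 \<psi>0 by (intro subst_matrix_inverse fps_inv)
  qed (use n \<phi>0 \<psi>0 coalg_endo_subst_matrix in auto)
qed

lemma conj_model_prod_subst_nth:
  fixes \<phi> :: "'a::field_char_0 fps"
  assumes \<phi>0: "\<phi> $ 0 = 0" and \<phi>1: "\<phi> $ 1 = 1" and n: "1 < n" and v: "v < n"
  shows "conj_bilin n (subst_matrix \<phi>) (subst_matrix (fps_inv \<phi>)) (model_prod m \<sigma>) 1 v 1
       = (gser m (\<sigma> 1) oo \<phi>) $ v"
proof -
  let ?T = "subst_matrix \<phi>" and ?S = "subst_matrix (fps_inv \<phi>)"
  have T1: "?T 1 u = (if u = 1 then 1 else 0)" for u
    using \<phi>1 fps_power_nth_below[OF \<phi>0, of 1 u] by (cases "u = 0") (auto simp: subst_matrix_def)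
  have S11: "?S 1 1 = 1"
    using \<phi>1 by (simp add: subst_matrix_def fps_inv_def)
  have "(\<Sum>u<n. \<Sum>w<n. ?T 1 u * ?T v w * model_prod m \<sigma> u w r)
      = (\<Sum>u<n. ?T 1 u * (\<Sum>w<n. ?T v w * model_prod m \<sigma> u w r))" for r
    by (simp add: sum_distrib_left mult.assoc)
  also have "\<dots> r = (\<Sum>w<n. ?T v w * model_prod m \<sigma> 1 w r)" for r
    using n by (simp add: T1[unfolded One_nat_def] mult_delta_left)
  finally have "conj_bilin n ?T ?S (model_prod m \<sigma>) 1 v 1
      = (\<Sum>r<n. (\<Sum>w<n. ?T v w * model_prod m \<sigma> 1 w r) * ?S r 1)"
    by (simp add: conj_bilin_def)
  also have "\<dots> = (\<Sum>r<n. if r = 1 then (\<Sum>w<n. ?T v w * gser_coeff m (\<sigma> 1) w) * ?S 1 1 else 0)"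
    by (intro sum.cong refl) (auto simp: model_prod_def)
  also have "\<dots> = (\<Sum>w<n. ?T v w * gser_coeff m (\<sigma> 1) w)"
    using n S11 by simp
  also have "\<dots> = (\<Sum>i=0..v. gser_coeff m (\<sigma> 1) i * (\<phi> ^ i) $ v)"
  proof (rule sum.mono_neutral_cong_right)
    show "\<forall>i\<in>{..<n} - {0..v}. ?T v i * gser_coeff m (\<sigma> 1) i = 0"
      using fps_power_nth_below[OF \<phi>0] by (auto simp: subst_matrix_def)
  qed (use v in \<open>auto simp: subst_matrix_def\<close>)
  also have "\<dots> = (gser m (\<sigma> 1) oo \<phi>) $ v"
    by (simp add: fps_compose_nth gser_def)
  finally show ?thesis .
qed

subsection \<open>Prescribing \<open>G\<^sub>1 \<circ> \<phi>\<close>\<close>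

lemma fps_power_eq_imp_eq:
  fixes a b :: "'a::field_char_0 fps"
  assumes m: "m > 0" and a0: "a $ 0 = 1" and b0: "b $ 0 = 1" and eq: "a ^ m = b ^ m"
  shows "a = b"
proof -
  obtain k where k: "m = Suc k" using m by (cases m) auto
  have "(b ^ m) $ 0 = 1" using b0 by (simp add: fps_power_zeroth)
  then have "a = fps_radical (\<lambda>_ _. 1) (Suc k) (b ^ m)" and "b = fps_radical (\<lambda>_ _. 1) (Suc k) (b ^ m)"
    using radical_unique[of "\<lambda>_ _. 1" k "b ^ m" a] radical_unique[of "\<lambda>_ _. 1" k "b ^ m" b] a0 b0 eq k
    by simp_all
  then show ?thesis by simp
qed

lemma exists_subst_inverse_power:
  fixes P Q :: "'a::field_char_0 fps"
  assumes m: "m > 0" and P: "P = 1 + fps_X ^ m * Q" and Q0: "Q $ 0 = 1"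
  shows "\<exists>\<phi>. \<phi> $ 0 = 0 \<and> \<phi> $ 1 = 1 \<and> P ^ m * (1 - fps_const (of_nat m) * \<phi> ^ m) = 1"
proof -
  have P0: "P $ 0 = 1"
    using m by (simp add: P)
  then have Pm0: "(P ^ m) $ 0 = 1"
    by (simp add: fps_power_zeroth)
  define W where "W = Q * (\<Sum>i<m. P ^ i)"
  have W: "P ^ m - 1 = fps_X ^ m * W"
    unfolding W_def power_diff_1_eq by (simp add: P mult_ac)
  have W0: "W $ 0 = of_nat m"
    by (simp add: W_def Q0 fps_sum_nth fps_power_zeroth P0)
  define w where "w = fps_const (1 / of_nat m) * W * inverse (P ^ m)"
  have w0: "w $ 0 = 1"
    using m by (simp add: w_def W0 Pm0 fps_inverse_def)
  obtain k where k: "m = Suc k" using m by (cases m) auto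
  define \<rho> where "\<rho> = fps_radical (\<lambda>_ _. 1) m w"
  have \<rho>m: "\<rho> ^ m = w"
    unfolding \<rho>_def k using power_radical[of w "\<lambda>_ _. 1" k] w0 by simp
  have \<rho>0: "\<rho> $ 0 = 1"
    using m by (simp add: \<rho>_def)
  define \<phi> where "\<phi> = fps_X * \<rho>"
  have inverse_Pm: "P ^ m * inverse (P ^ m) = 1"
    using Pm0 by (intro inverse_mult_eq_1') simp
  have "fps_const (of_nat m) * \<phi> ^ m
      = (fps_const (of_nat m) * fps_const (1 / of_nat m)) * (fps_X ^ m * W) * inverse (P ^ m)"
    by (simp add: \<phi>_def power_mult_distrib \<rho>m w_def mult_ac)
  also have "\<dots> = (P ^ m - 1) * inverse (P ^ m)"
    using m by (simp add: W)
  finally have m_phi: "fps_const (of_nat m) * \<phi> ^ m = (P ^ m - 1) * inverse (P ^ m)" .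
  have "P ^ m * (1 - fps_const (of_nat m) * \<phi> ^ m) = P ^ m - (P ^ m - 1) * (P ^ m * inverse (P ^ m))"
    unfolding m_phi by (simp add: algebra_simps)
  then have "P ^ m * (1 - fps_const (of_nat m) * \<phi> ^ m) = 1"
    by (simp add: inverse_Pm)
  moreover have "\<phi> $ 0 = 0" and "\<phi> $ 1 = 1"
    by (simp_all add: \<phi>_def \<rho>0)
  ultimately show ?thesis by blast
qed

lemma gser_compose_power:
  fixes \<phi> :: "'a::field_char_0 fps"
  assumes m: "m > 0" and \<phi>0: "\<phi> $ 0 = 0"
  shows "(gser m 1 oo \<phi>) ^ m * (1 - fps_const (of_nat m) * \<phi> ^ m) = 1"
proof -
  have "((1 - fps_const (of_nat m) * fps_X ^ m) * gser m 1 ^ m) oo \<phi> = 1"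
    by (simp add: gser_power_m[OF m])
  moreover have "fps_X ^ m oo \<phi> = \<phi> ^ m"
    by (simp add: fps_compose_power[OF \<phi>0, symmetric] \<phi>0)
  ultimately show ?thesis
    by (simp add: fps_compose_mult_distrib[OF \<phi>0] fps_compose_sub_distrib fps_compose_power[OF \<phi>0]
                  mult.commute)
qed

lemma exists_subst_gser_eq:
  fixes P Q :: "'a::field_char_0 fps"
  assumes m: "m > 0" and P: "P = 1 + fps_X ^ m * Q" and Q0: "Q $ 0 = 1"
  shows "\<exists>\<phi>. \<phi> $ 0 = 0 \<and> \<phi> $ 1 = 1 \<and> gser m 1 oo \<phi> = P"
proof -
  obtain \<phi> where \<phi>0: "\<phi> $ 0 = 0" and \<phi>1: "\<phi> $ 1 = 1"
    and P_inverse: "P ^ m * (1 - fps_const (of_nat m) * \<phi> ^ m) = 1"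
    using exists_subst_inverse_power[OF assms] by blast
  let ?D = "1 - fps_const (of_nat m) * \<phi> ^ m" and ?H = "gser m 1 oo \<phi>"
  have H_inverse: "?H ^ m * ?D = 1"
    by (rule gser_compose_power[OF m \<phi>0])
  have "?H ^ m = ?H ^ m * (P ^ m * ?D)"
    by (simp only: P_inverse mult_1_right)
  also have "\<dots> = P ^ m * (?H ^ m * ?D)"
    by (rule mult.left_commute)
  finally have powers_eq: "?H ^ m = P ^ m"
    by (simp only: H_inverse mult_1_right)
  have "?H $ 0 = 1" and "P $ 0 = 1"
    using m by (simp_all add: gser_def P)
  then have "?H = P"
    using powers_eq by (rule fps_power_eq_imp_eq[OF m])
  with \<phi>0 \<phi>1 show ?thesis by blast
qed

theorem corollary3p3:
  fixes pv :: "nat \<Rightarrow> 'a::field_char_0" and n v0 :: nat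
  assumes "alg_closed_field TYPE('a)"
    and "n \<ge> 2" and "1 \<le> v0" and "v0 < n" and "pv v0 = 1"
  shows "\<exists>p :: 'a bilin. cycle_coalgebra n p \<and>
           (\<forall>v<v0. p 1 v 1 = (if v = 0 then 1 else 0)) \<and>
           (\<forall>v. v0 \<le> v \<and> v < n \<longrightarrow> p 1 v 1 = pv v)"
proof -
  define P :: "'a fps" where "P = Abs_fps (\<lambda>v. if v = 0 then 1 else if v < v0 then 0 else pv v)"
  define Q :: "'a fps" where "Q = Abs_fps (\<lambda>v. P $ (v + v0))"
  have "P = 1 + fps_X ^ v0 * Q" and "Q $ 0 = 1"
    using assms by (auto simp: fps_eq_iff fps_X_power_mult_nth P_def Q_def)
  then obtain \<phi> where \<phi>0: "\<phi> $ 0 = 0" and \<phi>1: "\<phi> $ 1 = 1" and G\<phi>: "gser v0 1 oo \<phi> = P"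
    using exists_subst_gser_eq[of v0 P Q] assms by auto
  interpret coalg_auto n "subst_matrix \<phi>" "subst_matrix (fps_inv \<phi>)"
    using assms \<phi>0 \<phi>1 by (intro coalg_auto_subst_matrix) auto
  let ?p = "conj_bilin n (subst_matrix \<phi>) (subst_matrix (fps_inv \<phi>)) (model_prod v0 of_nat)"
  have "?p 1 v 1 = P $ v" if "v < n" for v
    using conj_model_prod_subst_nth[OF \<phi>0 \<phi>1 _ that, of v0 of_nat] assms G\<phi> by simp
  then show ?thesis
    using cycle_coalgebra_conj_model_prod assms by (intro exI[of _ ?p]) (auto simp: P_def)
qed

end
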